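(* There exists $C>0$ such that the following holds. Let $d,r:\mathbb{N}\to\mathbb{N}$ be functions with $d$ nondecreasing, taking only odd values at least $5$, $d(n)\ge2r(n)+1$, and $r(n)\ge n$, $d(n)-2r(n)\ge n$ for all $n$. Let $\alpha_n=(1\;2\;\cdots\;d(n))$, $\beta_n=(1\;(1+r(n))\;(1+2r(n)))\in\mathrm{Alt}(d(n))$, $\alpha=(\alpha_n)_n,\beta=(\beta_n)_n\in\prod_n\mathrm{Alt}(d(n))$, $S=\{\alpha,\beta\}$ and $G=\langle S\rangle$. Then $\mathcal{L}_G^S(l)\le\exp(Cl^2\log l)$ for all integers $l\ge2$.
   Context: $\mathbb{N}=\{1,2,\dots\}$. $B_S(l)$ is the ball of radius $l$ about $e$ in the word metric of $S$. A local embedding of $A\subseteq G$ into a group $Q$ is an injective map $\psi:A\to Q$ with $\psi(gh)=\psi(g)\psi(h)$ whenever $g,h,gh\in A$. $\mathcal{L}_G^S(l)$ is the minimal order of a finite group admitting a local embedding of $B_S(l)$. *)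

theory Defs
  imports "HOL-Algebra.Algebra" Complex_Main
begin

text \<open>Elements of the product group prod_{n in N} Alt(d(n)) are represented as
  functions g :: nat => (nat => nat), where g n is a permutation of {1..d n}
  (identity outside), for n >= 1; the component at index 0 is the identity.\<close>

type_synonym pelem = "nat \<Rightarrow> nat \<Rightarrow> nat"

definition pmult :: "pelem \<Rightarrow> pelem \<Rightarrow> pelem" where
  "pmult g h = (\<lambda>n. g n \<circ> h n)"

definition pone :: pelem where
  "pone = (\<lambda>n. id)"

definition pinv :: "pelem \<Rightarrow> pelem" where
  "pinv g = (\<lambda>n. Hilbert_Choice.inv (g n))"

definition alpha_seq :: "(nat \<Rightarrow> nat) \<Rightarrow> pelem" where
  "alpha_seq d = (\<lambda>n i. if n = 0 then i
       else if 1 \<le> i \<and> i < d n then i + 1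
       else if i = d n then 1 else i)"

definition beta_seq :: "(nat \<Rightarrow> nat) \<Rightarrow> pelem" where
  "beta_seq r = (\<lambda>n i. if n = 0 then i
       else if i = 1 then 1 + r n
       else if i = 1 + r n then 1 + 2 * r n
       else if i = 1 + 2 * r n then 1 else i)"

definition word_ball :: "pelem set \<Rightarrow> nat \<Rightarrow> pelem set" where
  "word_ball S l = {foldr pmult w pone | w. length w \<le> l \<and> set w \<subseteq> S \<union> pinv ` S}"

definition local_embedding ::
  "('a \<Rightarrow> 'a \<Rightarrow> 'a) \<Rightarrow> 'a set \<Rightarrow> ('b, 'c) monoid_scheme \<Rightarrow> ('a \<Rightarrow> 'b) \<Rightarrow> bool" where
  "local_embedding mul A Q \<psi> \<longleftrightarrow>
     inj_on \<psi> A \<and> \<psi> ` A \<subseteq> carrier Q \<and>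
     (\<forall>g\<in>A. \<forall>h\<in>A. mul g h \<in> A \<longrightarrow> \<psi> (mul g h) = \<psi> g \<otimes>\<^bsub>Q\<^esub> \<psi> h)"

text \<open>Minimal order of a finite group admitting a local embedding of A.
  Every finite group is isomorphic to one with carrier a subset of nat, so it
  suffices to range over groups on nat.\<close>
definition min_local_order :: "('a \<Rightarrow> 'a \<Rightarrow> 'a) \<Rightarrow> 'a set \<Rightarrow> nat" where
  "min_local_order mul A = (LEAST k. \<exists>(Q :: nat monoid) \<psi>.
      group Q \<and> finite (carrier Q) \<and> order Q = k \<and> local_embedding mul A Q \<psi>)"

definition L_alt :: "(nat \<Rightarrow> nat) \<Rightarrow> (nat \<Rightarrow> nat) \<Rightarrow> nat \<Rightarrow> nat" where
  "L_alt d r l = min_local_order pmult (word_ball {alpha_seq d, beta_seq r} l)"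

end

theory Submission
  imports Defs
begin

text \<open>
  Fix a coordinate n and write D = d n, r = r n and g = D - 2 r. On the points 1..D, read as
  residues mod D, alpha is the rotation x \<mapsto> x + 1 and beta the 3-cycle of the residues
  0, r, 2 r. A word of length at most L rotates every point that stays farther than L from these
  three residues by its alpha-exponent; a point near them is tracked by its offset from the
  nearest one, and this only involves the congruences s + c r = 0 (mod D) with |c| \<le> 2 and
  |s| \<le> 3 L. When r or g is at least K \<ge> 6 L + 2, these congruences and the existence of far
  points do not change if r and g are replaced by min r K and min g K. Hence a word of length at
  most 3 l is trivial in coordinate n iff it is trivial with truncated parameters, and since
  r n, g n \<ge> n, all coordinates n \<ge> K truncate to (K, K). For K = 18 l + 2, sending an element of
  the l-ball to the action of one of its words with truncated parameters in coordinates 1..K is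
  thus a local embedding into a product of K symmetric groups of degree at most 3 K, whose order
  is at most (3 K)!^K = exp (O (l^2 log l)).
\<close>

section \<open>Local embeddings from word maps\<close>

lemma local_embedding_of_word_maps:
  fixes eval :: "'w list \<Rightarrow> 'a" and emb :: "'w list \<Rightarrow> 'b"
  assumes eval_append: "\<And>u v. eval (u @ v) = mul (eval u) (eval v)"
    and emb_append: "\<And>u v. emb (u @ v) = emb u \<otimes>\<^bsub>Q\<^esub> emb v"
    and emb_carrier: "\<And>u. emb u \<in> carrier Q"
    and faithful: "\<And>u v. length u \<le> l \<Longrightarrow> length v \<le> 2 * l \<Longrightarrow> eval u = eval v \<longleftrightarrow> emb u = emb v"
  shows "\<exists>\<psi>. local_embedding mul (eval ` {u. length u \<le> l}) Q \<psi>"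
proof -
  let ?A = "eval ` {u. length u \<le> l}"
  define word where "word g = (SOME u. length u \<le> l \<and> eval u = g)" for g
  have word: "length (word g) \<le> l \<and> eval (word g) = g" if "g \<in> ?A" for g
  proof -
    from that obtain u where "length u \<le> l \<and> eval u = g" by blast
    then show ?thesis unfolding word_def by (rule someI)
  qed
  have "local_embedding mul ?A Q (emb \<circ> word)"
    unfolding local_embedding_def
  proof (intro conjI ballI impI)
    show "inj_on (emb \<circ> word) ?A"
    proof (rule inj_onI)
      fix g h assume "g \<in> ?A" "h \<in> ?A" "(emb \<circ> word) g = (emb \<circ> word) h"
      then show "g = h" using faithful[of "word g" "word h"] word by fastforce
    qed
    show "(emb \<circ> word) ` ?A \<subseteq> carrier Q" using emb_carrier by auto
    fix g h assume g: "g \<in> ?A" and h: "h \<in> ?A" and gh: "mul g h \<in> ?A"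
    have "eval (word (mul g h)) = eval (word g @ word h)"
      using word[OF g] word[OF h] word[OF gh] eval_append by simp
    moreover have "length (word (mul g h)) \<le> l" "length (word g @ word h) \<le> 2 * l"
      using word[OF g] word[OF h] word[OF gh] by auto
    ultimately have "emb (word (mul g h)) = emb (word g @ word h)"
      using faithful by blast
    then show "(emb \<circ> word) (mul g h) = (emb \<circ> word) g \<otimes>\<^bsub>Q\<^esub> (emb \<circ> word) h"
      by (simp add: emb_append)
  qed
  then show ?thesis by blast
qed

lemma local_embedding_comp_hom:
  assumes "local_embedding mul A G \<psi>" "\<phi> \<in> hom G H" "inj_on \<phi> (carrier G)"
  shows "local_embedding mul A H (\<phi> \<circ> \<psi>)"
proof -
  have "inj_on \<psi> A" "\<psi> ` A \<subseteq> carrier G"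
    using assms(1) by (auto simp: local_embedding_def)
  then have "inj_on (\<phi> \<circ> \<psi>) A"
    using assms(3) by (blast intro: comp_inj_on inj_on_subset)
  then show ?thesis
    using assms by (auto simp: local_embedding_def hom_def Pi_iff image_subset_iff)
qed

lemma finite_group_nat_copy:
  fixes G :: "('a, 'c) monoid_scheme"
  assumes "group G" "finite (carrier G)"
  obtains Q :: "nat monoid" and \<phi> where "group Q" "finite (carrier Q)" "order Q = order G"
    "\<phi> \<in> hom G Q" "inj_on \<phi> (carrier G)"
proof -
  obtain h :: "'a \<Rightarrow> nat" where h: "inj_on h (carrier G)"
    using ex_bij_betw_finite_nat[OF assms(2)] bij_betw_def by blast
  define H :: "nat monoid" where "H = \<lparr>carrier = UNIV,
      monoid.mult = \<lambda>a b. h (inv_into (carrier G) h a \<otimes>\<^bsub>G\<^esub> inv_into (carrier G) h b),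
      one = h \<one>\<^bsub>G\<^esub>\<rparr>"
  have "h \<in> hom G H"
    using h by (simp add: hom_def H_def inv_into_f_f)
  define Q where "Q = H\<lparr>carrier := h ` carrier G, one := h \<one>\<^bsub>G\<^esub>\<rparr>"
  have "group Q"
    unfolding Q_def by (rule group.hom_imp_img_group[OF assms(1) \<open>h \<in> hom G H\<close>])
  moreover have "h \<in> hom G Q"
    using \<open>h \<in> hom G H\<close> by (auto simp: hom_def Q_def)
  moreover have "order Q = order G"
    using card_image[OF h] by (simp add: order_def Q_def)
  ultimately show ?thesis
    using that h assms(2) by (simp add: Q_def)
qed

lemma min_local_order_le_order:
  assumes "group G" "finite (carrier G)" "local_embedding mul A G \<psi>"
  shows "min_local_order mul A \<le> order G"
proof -
  obtain Q :: "nat monoid" and \<phi> where "group Q" "finite (carrier Q)" "order Q = order G"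
    "\<phi> \<in> hom G Q" "inj_on \<phi> (carrier G)"
    using finite_group_nat_copy[OF assms(1,2)] .
  then show ?thesis
    unfolding min_local_order_def
    by (intro Least_le) (use local_embedding_comp_hom[OF assms(3)] in blast)
qed

section \<open>Words acting on one coordinate\<close>

text \<open>The letters stand for alpha, beta and their inverses; \<open>letter_perm (d n) (r n) c\<close> is
  the n-th coordinate of the corresponding generator.\<close>

datatype letter = Alpha | Beta | Alpha_inv | Beta_inv

fun letter_perm :: "nat \<Rightarrow> nat \<Rightarrow> letter \<Rightarrow> nat \<Rightarrow> nat" where
  "letter_perm D r Alpha i = (if 1 \<le> i \<and> i < D then i + 1 else if i = D then 1 else i)"
| "letter_perm D r Beta i = (if i = 1 then 1 + r else if i = 1 + r then 1 + 2 * r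
     else if i = 1 + 2 * r then 1 else i)"
| "letter_perm D r Alpha_inv i = (if 1 < i \<and> i \<le> D then i - 1 else if i = 1 then D else i)"
| "letter_perm D r Beta_inv i = (if i = 1 then 1 + 2 * r else if i = 1 + r then 1
     else if i = 1 + 2 * r then 1 + r else i)"

fun letter_inv :: "letter \<Rightarrow> letter" where
  "letter_inv Alpha = Alpha_inv"
| "letter_inv Alpha_inv = Alpha"
| "letter_inv Beta = Beta_inv"
| "letter_inv Beta_inv = Beta"

lemma letter_inv_inv [simp]: "letter_inv (letter_inv c) = c"
  by (cases c) auto

lemma letter_perm_inv_cancel:
  assumes "1 \<le> r" "2 * r + 1 \<le> D"
  shows "letter_perm D r (letter_inv c) (letter_perm D r c i) = i"
  using assms by (cases c) auto

lemma letter_perm_permutes: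
  assumes "1 \<le> r" "2 * r + 1 \<le> D"
  shows "letter_perm D r c permutes {1..D}"
  unfolding permutes_def
proof (intro conjI allI impI)
  show "letter_perm D r c x = x" if "x \<notin> {1..D}" for x
    using that assms by (cases c) auto
  show "\<exists>!x. letter_perm D r c x = y" for y
    using letter_perm_inv_cancel[OF assms, of c] letter_perm_inv_cancel[OF assms, of "letter_inv c"]
    by (metis letter_inv_inv)
qed

lemma inv_letter_perm:
  assumes "1 \<le> r" "2 * r + 1 \<le> D"
  shows "Hilbert_Choice.inv (letter_perm D r c) = letter_perm D r (letter_inv c)"
  using letter_perm_inv_cancel[OF assms, of c] letter_perm_inv_cancel[OF assms, of "letter_inv c"]
  by (intro inv_unique_comp) (auto simp: fun_eq_iff)

fun word_perm :: "nat \<Rightarrow> nat \<Rightarrow> letter list \<Rightarrow> nat \<Rightarrow> nat" where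
  "word_perm D r [] = id"
| "word_perm D r (c # u) = letter_perm D r c \<circ> word_perm D r u"

lemma word_perm_append: "word_perm D r (u @ v) = word_perm D r u \<circ> word_perm D r v"
  by (induction u) auto

lemma word_perm_permutes:
  assumes "1 \<le> r" "2 * r + 1 \<le> D"
  shows "word_perm D r u permutes {1..D}"
proof (induction u)
  case Nil
  show ?case using permutes_id by (simp add: id_def)
next
  case (Cons c u)
  show ?case
    unfolding word_perm.simps by (rule permutes_compose[OF Cons letter_perm_permutes[OF assms]])
qed

definition word_inv :: "letter list \<Rightarrow> letter list" where
  "word_inv u = rev (map letter_inv u)"

lemma length_word_inv [simp]: "length (word_inv u) = length u"
  by (simp add: word_inv_def)

lemma word_perm_word_inv_comp:
  assumes "1 \<le> r" "2 * r + 1 \<le> D"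
  shows "word_perm D r (word_inv u) \<circ> word_perm D r u = id"
proof (induction u)
  case Nil
  show ?case by (simp add: word_inv_def)
next
  case (Cons c u)
  have "letter_perm D r (letter_inv c) \<circ> letter_perm D r c = id"
    using letter_perm_inv_cancel[OF assms] by (auto simp: fun_eq_iff)
  moreover have "word_perm D r (word_inv (c # u)) = word_perm D r (word_inv u) \<circ> letter_perm D r (letter_inv c)"
    by (simp add: word_inv_def word_perm_append)
  ultimately have "word_perm D r (word_inv (c # u)) \<circ> word_perm D r (c # u)
      = word_perm D r (word_inv u) \<circ> word_perm D r u"
    by (simp add: comp_assoc) (simp add: comp_assoc[symmetric])
  also have "\<dots> = id" by (rule Cons)
  finally show ?case .
qed

lemma word_perm_comp_word_inv:
  assumes "1 \<le> r" "2 * r + 1 \<le> D"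
  shows "word_perm D r u \<circ> word_perm D r (word_inv u) = id"
  using word_perm_word_inv_comp[OF assms, of "word_inv u"]
  by (simp add: word_inv_def rev_map comp_def)

lemma word_perm_eq_iff:
  assumes "1 \<le> r" "2 * r + 1 \<le> D"
  shows "word_perm D r u = word_perm D r v \<longleftrightarrow> word_perm D r (word_inv u @ v) = id"
proof
  assume "word_perm D r u = word_perm D r v"
  then show "word_perm D r (word_inv u @ v) = id"
    using word_perm_word_inv_comp[OF assms, of u] by (simp add: word_perm_append)
next
  assume "word_perm D r (word_inv u @ v) = id"
  then have "word_perm D r u = word_perm D r u \<circ> word_perm D r (word_inv u) \<circ> word_perm D r v"
    by (simp add: word_perm_append comp_assoc)
  then show "word_perm D r u = word_perm D r v"
    by (simp add: word_perm_comp_word_inv[OF assms])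
qed

section \<open>Cyclic and relative coordinates\<close>

text \<open>The points 1, 1 + r, 1 + 2 r moved by beta are the residues 0, r, 2 r.\<close>

definition cyc_point :: "nat \<Rightarrow> int \<Rightarrow> nat" where
  "cyc_point D x = nat (x mod int D) + 1"

lemma cyc_point_eq_iff: "0 < D \<Longrightarrow> cyc_point D x = cyc_point D y \<longleftrightarrow> int D dvd (x - y)"
  by (auto simp: cyc_point_def nat_eq_iff mod_eq_dvd_iff)

lemma cyc_point_of_nat: "0 \<le> x \<Longrightarrow> x < int D \<Longrightarrow> cyc_point D x = nat x + 1"
  by (simp add: cyc_point_def)

lemma cyc_point_range: "0 < D \<Longrightarrow> cyc_point D x \<in> {1..D}"
proof -
  assume "0 < D"
  then have "x mod int D < int D" "0 \<le> x mod int D" by auto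
  then show ?thesis unfolding cyc_point_def by auto
qed

lemma cyc_point_eq_1_iff: "0 < D \<Longrightarrow> cyc_point D x = 1 \<longleftrightarrow> int D dvd x"
  using cyc_point_eq_iff[of D x 0] cyc_point_of_nat[of 0 D] by simp

lemma cyc_point_eq_Suc_iff: "k < D \<Longrightarrow> cyc_point D x = 1 + k \<longleftrightarrow> int D dvd (x - int k)"
  using cyc_point_eq_iff[of D x "int k"] cyc_point_of_nat[of "int k" D] by simp

lemma letter_perm_Alpha_cyc_point:
  assumes "0 < D"
  shows "letter_perm D r Alpha (cyc_point D x) = cyc_point D (x + 1)"
proof -
  define m where "m = x mod int D"
  have m: "0 \<le> m" "m < int D" and x: "cyc_point D x = nat m + 1"
    using assms by (auto simp: m_def cyc_point_def)
  have x1: "(x + 1) mod int D = (m + 1) mod int D"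
    by (simp add: m_def mod_add_left_eq)
  show ?thesis
  proof (cases "m + 1 < int D")
    case True
    then show ?thesis using x x1 m by (simp add: cyc_point_def nat_add_distrib)
  next
    case False
    then have "m + 1 = int D" using m by simp
    then have "cyc_point D x = D" "(x + 1) mod int D = 0" using x x1 m by simp_all
    then show ?thesis by (simp add: cyc_point_def)
  qed
qed

lemma letter_perm_Alpha_inv_cyc_point:
  assumes "0 < D"
  shows "letter_perm D r Alpha_inv (cyc_point D x) = cyc_point D (x - 1)"
proof -
  have "cyc_point D x = letter_perm D r Alpha (cyc_point D (x - 1))"
    using letter_perm_Alpha_cyc_point[OF assms, of r "x - 1"] by (simp del: letter_perm.simps)
  then show ?thesis
    using cyc_point_range[OF assms, of "x - 1"] by (cases "cyc_point D (x - 1) = D") auto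
qed

lemma letter_perm_Beta_cyc_point:
  assumes "1 \<le> r" "2 * r + 1 \<le> D"
  shows "letter_perm D r Beta (cyc_point D x) =
    (if int D dvd x then cyc_point D (int r)
     else if int D dvd (x - int r) then cyc_point D (2 * int r)
     else if int D dvd (x - 2 * int r) then cyc_point D 0
     else cyc_point D x)"
  using assms cyc_point_eq_1_iff[of D x] cyc_point_eq_Suc_iff[of r D x]
    cyc_point_eq_Suc_iff[of "2 * r" D x] cyc_point_of_nat[of "int r" D]
    cyc_point_of_nat[of "2 * int r" D] cyc_point_of_nat[of 0 D]
  by auto

lemma letter_perm_Beta_inv_cyc_point:
  assumes "1 \<le> r" "2 * r + 1 \<le> D"
  shows "letter_perm D r Beta_inv (cyc_point D x) =
    (if int D dvd x then cyc_point D (2 * int r)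
     else if int D dvd (x - int r) then cyc_point D 0
     else if int D dvd (x - 2 * int r) then cyc_point D (int r)
     else cyc_point D x)"
  using assms cyc_point_eq_1_iff[of D x] cyc_point_eq_Suc_iff[of r D x]
    cyc_point_eq_Suc_iff[of "2 * r" D x] cyc_point_of_nat[of "int r" D]
    cyc_point_of_nat[of "2 * int r" D] cyc_point_of_nat[of 0 D]
  by auto

definition hits :: "nat \<Rightarrow> nat \<Rightarrow> int \<Rightarrow> int \<Rightarrow> bool" where
  "hits D r c s \<longleftrightarrow> int D dvd (s + c * int r)"

text \<open>A pair (j, t) stands for the residue j r + t, and T c s for the congruence
  s + c r = 0 (mod D), i.e. for \<open>hits D r c s\<close>. A run of a short word consults T only at small
  arguments (\<open>rel_run_cong\<close>), which makes it insensitive to truncating large parameters.\<close>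

fun rel_step :: "(int \<Rightarrow> int \<Rightarrow> bool) \<Rightarrow> letter \<Rightarrow> int \<times> int \<Rightarrow> int \<times> int" where
  "rel_step T Alpha (j, t) = (j, t + 1)"
| "rel_step T Alpha_inv (j, t) = (j, t - 1)"
| "rel_step T Beta (j, t) = (if T j t then (1, 0) else if T (j - 1) t then (2, 0)
     else if T (j - 2) t then (0, 0) else (j, t))"
| "rel_step T Beta_inv (j, t) = (if T j t then (2, 0) else if T (j - 1) t then (0, 0)
     else if T (j - 2) t then (1, 0) else (j, t))"

definition rel_returns :: "(int \<Rightarrow> int \<Rightarrow> bool) \<Rightarrow> letter list \<Rightarrow> int \<Rightarrow> int \<Rightarrow> bool" where
  "rel_returns T u j t \<longleftrightarrow>
     T (fst (foldr (rel_step T) u (j, t)) - j) (snd (foldr (rel_step T) u (j, t)) - t)"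

lemma rel_run_bounds:
  assumes "fst p \<in> {0, 1, 2}"
  shows "fst (foldr (rel_step T) u p) \<in> {0, 1, 2} \<and>
    \<bar>snd (foldr (rel_step T) u p)\<bar> \<le> \<bar>snd p\<bar> + int (length u)"
proof (induction u)
  case Nil
  then show ?case using assms by simp
next
  case (Cons c u)
  then show ?case
    by (cases "foldr (rel_step T) u p"; cases c) auto
qed

lemma rel_run_cong:
  assumes "fst p \<in> {0, 1, 2}"
    and "\<And>c s. \<bar>c\<bar> \<le> 2 \<Longrightarrow> \<bar>s\<bar> \<le> \<bar>snd p\<bar> + int (length u) \<Longrightarrow> T c s = T' c s"
  shows "foldr (rel_step T) u p = foldr (rel_step T') u p"
  using assms(2)
proof (induction u)
  case Nil
  then show ?case by simp
next
  case (Cons c u)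
  have IH: "foldr (rel_step T) u p = foldr (rel_step T') u p"
    using Cons.prems by (intro Cons.IH) force
  obtain j t where jt: "foldr (rel_step T') u p = (j, t)" by fastforce
  have "j \<in> {0, 1, 2}" "\<bar>t\<bar> \<le> \<bar>snd p\<bar> + int (length u)"
    using rel_run_bounds[OF assms(1), of T' u] jt by auto
  then have "T j t = T' j t" "T (j - 1) t = T' (j - 1) t" "T (j - 2) t = T' (j - 2) t"
    using Cons.prems by (auto intro!: Cons.prems)
  then show ?case using IH jt by (cases c) auto
qed

lemma word_perm_cyc_point_rel:
  assumes "1 \<le> r" "2 * r + 1 \<le> D" "j \<in> {0, 1, 2}"
  shows "word_perm D r u (cyc_point D (j * int r + t)) =
    (let (j', t') = foldr (rel_step (hits D r)) u (j, t) in cyc_point D (j' * int r + t'))"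
proof (induction u)
  case Nil
  then show ?case by simp
next
  case (Cons c u)
  obtain i s where run: "foldr (rel_step (hits D r)) u (j, t) = (i, s)" by fastforce
  have x: "word_perm D r (c # u) (cyc_point D (j * int r + t)) = letter_perm D r c (cyc_point D (i * int r + s))"
    using Cons run by simp
  have D: "0 < D" using assms by simp
  have "int D dvd (i * int r + s - k * int r) \<longleftrightarrow> hits D r (i - k) s" for k
    by (simp add: hits_def algebra_simps)
  from this[of 0] this[of 1] this[of 2] show ?case
    using x run letter_perm_Alpha_cyc_point[OF D] letter_perm_Alpha_inv_cyc_point[OF D]
      letter_perm_Beta_cyc_point[OF assms(1,2)] letter_perm_Beta_inv_cyc_point[OF assms(1,2)]
    by (cases c) (auto simp: algebra_simps)
qed

lemma word_perm_fixes_iff_rel_returns: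
  assumes "1 \<le> r" "2 * r + 1 \<le> D" "j \<in> {0, 1, 2}"
  shows "word_perm D r u (cyc_point D (j * int r + t)) = cyc_point D (j * int r + t) \<longleftrightarrow>
    rel_returns (hits D r) u j t"
proof -
  obtain j' t' where q: "foldr (rel_step (hits D r)) u (j, t) = (j', t')" by fastforce
  have "int D dvd (j' * int r + t' - (j * int r + t)) \<longleftrightarrow> hits D r (j' - j) (t' - t)"
    by (simp add: hits_def algebra_simps)
  then show ?thesis
    using word_perm_cyc_point_rel[OF assms, of u t] cyc_point_eq_iff[of D] assms q
    by (simp add: rel_returns_def)
qed

fun alpha_exp :: "letter list \<Rightarrow> int" where
  "alpha_exp [] = 0"
| "alpha_exp (Alpha # u) = alpha_exp u + 1"
| "alpha_exp (Alpha_inv # u) = alpha_exp u - 1"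
| "alpha_exp (Beta # u) = alpha_exp u"
| "alpha_exp (Beta_inv # u) = alpha_exp u"

lemma abs_alpha_exp_le: "\<bar>alpha_exp u\<bar> \<le> int (length u)"
  by (induction u rule: alpha_exp.induct) auto

definition far_point :: "nat \<Rightarrow> nat \<Rightarrow> nat \<Rightarrow> int \<Rightarrow> bool" where
  "far_point D r L x \<longleftrightarrow>
     (\<forall>s k. \<bar>s\<bar> \<le> int L \<longrightarrow> k \<in> {0, 1, 2} \<longrightarrow> \<not> int D dvd (x + s - k * int r))"

lemma far_pointD:
  assumes "far_point D r L x" "\<bar>s\<bar> \<le> int L"
  shows "\<not> int D dvd (x + s) \<and> \<not> int D dvd (x + s - int r) \<and> \<not> int D dvd (x + s - 2 * int r)"
  using assms unfolding far_point_def by (metis insertCI mult_1 mult_zero_left diff_zero)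

lemma word_perm_far_point:
  assumes "1 \<le> r" "2 * r + 1 \<le> D" "far_point D r L x" "length u \<le> L"
  shows "word_perm D r u (cyc_point D x) = cyc_point D (x + alpha_exp u)"
  using assms(4)
proof (induction u rule: alpha_exp.induct)
  case 1
  then show ?case by simp
next
  case (2 u)
  then show ?case using letter_perm_Alpha_cyc_point[of D r "x + alpha_exp u"] assms(2)
    by (simp add: algebra_simps)
next
  case (3 u)
  then show ?case using letter_perm_Alpha_inv_cyc_point[of D r "x + alpha_exp u"] assms(2)
    by (simp add: algebra_simps)
next
  case (4 u)
  have "\<bar>alpha_exp u\<bar> \<le> int L" using abs_alpha_exp_le[of u] 4(2) by simp
  from far_pointD[OF assms(3) this] show ?case
    using 4 letter_perm_Beta_cyc_point[OF assms(1,2), of "x + alpha_exp u"] by simp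
next
  case (5 u)
  have "\<bar>alpha_exp u\<bar> \<le> int L" using abs_alpha_exp_le[of u] 5(2) by simp
  from far_pointD[OF assms(3) this] show ?case
    using 5 letter_perm_Beta_inv_cyc_point[OF assms(1,2), of "x + alpha_exp u"] by simp
qed

lemma word_perm_eq_idI:
  assumes r: "1 \<le> r" "2 * r + 1 \<le> D" and len: "length u \<le> L" and exp: "alpha_exp u = 0"
    and near: "\<And>j t. j \<in> {0, 1, 2} \<Longrightarrow> \<bar>t\<bar> \<le> int L \<Longrightarrow> rel_returns (hits D r) u j t"
  shows "word_perm D r u = id"
proof
  fix i
  show "word_perm D r u i = id i"
  proof (cases "i \<in> {1..D}")
    case False
    then show ?thesis using permutes_not_in[OF word_perm_permutes[OF r]] by simp
  next
    case True
    define x where "x = int i - 1"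
    have i: "i = cyc_point D x"
      using True by (auto simp: x_def cyc_point_of_nat)
    show ?thesis
    proof (cases "far_point D r L x")
      case True
      then show ?thesis using word_perm_far_point[OF r True len] exp i by simp
    next
      case False
      then obtain s k where sk: "\<bar>s\<bar> \<le> int L" "k \<in> {0, 1, 2}" "int D dvd (x + s - k * int r)"
        unfolding far_point_def by blast
      then have "i = cyc_point D (k * int r + - s)"
        using i cyc_point_eq_iff[of D x "k * int r + - s"] r by (simp add: algebra_simps)
      then show ?thesis
        using word_perm_fixes_iff_rel_returns[OF r sk(2), of u "- s"] near[OF sk(2)] sk(1) by simp
    qed
  qed
qed

lemma word_perm_eq_id_iff:
  assumes r: "1 \<le> r" "2 * r + 1 \<le> D" and len: "length u \<le> L" and "2 * L < D"
    and far: "far_point D r L x\<^sub>0"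
  shows "word_perm D r u = id \<longleftrightarrow>
    alpha_exp u = 0 \<and> (\<forall>j\<in>{0, 1, 2}. \<forall>t. \<bar>t\<bar> \<le> int L \<longrightarrow> rel_returns (hits D r) u j t)"
proof (intro iffI conjI ballI allI impI)
  assume id: "word_perm D r u = id"
  have "cyc_point D x\<^sub>0 = cyc_point D (x\<^sub>0 + alpha_exp u)"
    using word_perm_far_point[OF r far len] id by simp
  then have "int D dvd alpha_exp u"
    using cyc_point_eq_iff[of D x\<^sub>0 "x\<^sub>0 + alpha_exp u"] r by simp
  moreover have "\<bar>alpha_exp u\<bar> < int D"
    using abs_alpha_exp_le[of u] len \<open>2 * L < D\<close> by linarith
  ultimately show "alpha_exp u = 0"
    by (metis dvd_imp_le_int abs_of_nat not_le)
  show "rel_returns (hits D r) u j t" if "j \<in> {0, 1, 2}" for j t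
    using word_perm_fixes_iff_rel_returns[OF r that, of u t] id by simp
next
  assume "alpha_exp u = 0 \<and> (\<forall>j\<in>{0, 1, 2}. \<forall>t. \<bar>t\<bar> \<le> int L \<longrightarrow> rel_returns (hits D r) u j t)"
  then show "word_perm D r u = id"
    using word_perm_eq_idI[OF r len] by blast
qed

section \<open>Truncating the parameters\<close>

lemma exists_far_point:
  assumes "1 \<le> r" "1 \<le> g" "2 * L + 2 \<le> r \<or> 2 * L + 2 \<le> g"
  shows "\<exists>x. far_point (2 * r + g) r L x"
proof -
  define x where "x = (if 2 * L + 2 \<le> r then int L + 1 else 2 * int r + int L + 1)"
  have x: "2 * L + 2 \<le> r \<and> x = int L + 1 \<or> 2 * L + 2 \<le> g \<and> x = 2 * int r + int L + 1"
    using assms(3) by (auto simp: x_def)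
  have "\<not> int (2 * r + g) dvd (x + s - k * int r)" if s: "\<bar>s\<bar> \<le> int L" and k: "k \<in> {0, 1, 2}" for s k
  proof -
    have "k * int r = 0 \<or> k * int r = int r \<or> k * int r = 2 * int r" using k by auto
    then have "x + s - k * int r \<noteq> 0 \<and> \<bar>x + s - k * int r\<bar> < int (2 * r + g)"
      using x s assms(1,2) by (elim disjE conjE; arith)
    then show ?thesis by (metis dvd_imp_le_int abs_of_nat not_le)
  qed
  then show ?thesis unfolding far_point_def by blast
qed

lemma hits_truncate:
  assumes "1 \<le> r" "1 \<le> g" "2 * M < K" "\<bar>s\<bar> \<le> int M" "\<bar>c\<bar> \<le> 2"
  shows "hits (2 * r + g) r c s \<longleftrightarrow> hits (2 * min r K + min g K) (min r K) c s"
proof (cases "r < K \<and> g < K")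
  case True
  then show ?thesis by simp
next
  case False
  define r' g' where "r' = min r K" and "g' = min g K"
  have dvd_small: "int D dvd y \<longleftrightarrow> y = - int D \<or> y = 0 \<or> y = int D"
    if "\<bar>y\<bar> < 2 * int D" for D y
  proof
    assume "int D dvd y"
    then obtain k where k: "y = int D * k" by blast
    with that have "int D * \<bar>k\<bar> < int D * 2" by (simp add: abs_mult mult.commute)
    then have "k \<in> {-1, 0, 1}" by (auto simp: mult_less_cancel_left)
    then show "y = - int D \<or> y = 0 \<or> y = int D" using k by auto
  qed auto
  have r': "r' = r \<or> (K \<le> r \<and> r' = K)" and g': "g' = g \<or> (K \<le> g \<and> g' = K)"
    by (auto simp: r'_def g'_def)
  have big: "K \<le> 2 * r + g" "K \<le> 2 * r' + g'" and s: "2 * \<bar>s\<bar> < int K"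
    using False assms by (auto simp: r'_def g'_def)
  have c: "c \<in> {-2, -1, 0, 1, 2}" using assms(5) by auto
  have "hits D q c s \<longleftrightarrow> s + c * int q = - int D \<or> s + c * int q = 0 \<or> s + c * int q = int D"
    if "D = 2 * q + e" "K \<le> D" for D q e
    unfolding hits_def using that s c by (intro dvd_small) auto
  then have "hits (2 * r + g) r c s \<longleftrightarrow> hits (2 * r' + g') r' c s"
    using big s r' g' c by (elim insertE emptyE) auto
  then show ?thesis by (simp add: r'_def g'_def)
qed

lemma rel_returns_cong:
  assumes "j \<in> {0, 1, 2}"
    and "\<And>c s. \<bar>c\<bar> \<le> 2 \<Longrightarrow> \<bar>s\<bar> \<le> 2 * \<bar>t\<bar> + int (length u) \<Longrightarrow> T c s = T' c s"
  shows "rel_returns T u j t \<longleftrightarrow> rel_returns T' u j t"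
proof -
  have run: "foldr (rel_step T) u (j, t) = foldr (rel_step T') u (j, t)"
    using assms by (intro rel_run_cong) auto
  obtain j' t' where q: "foldr (rel_step T) u (j, t) = (j', t')" by fastforce
  have "j' \<in> {0, 1, 2}" "\<bar>t'\<bar> \<le> \<bar>t\<bar> + int (length u)"
    using rel_run_bounds[of "(j, t)" T u] assms(1) q by auto
  then have "T (j' - j) (t' - t) = T' (j' - j) (t' - t)"
    using assms by (intro assms(2)) auto
  then show ?thesis unfolding rel_returns_def run[symmetric] q by simp
qed

lemma word_perm_eq_id_truncate:
  assumes "1 \<le> r" "1 \<le> g" "length u \<le> L" "6 * L + 2 \<le> K"
  shows "word_perm (2 * r + g) r u = id \<longleftrightarrow>
    word_perm (2 * min r K + min g K) (min r K) u = id"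
proof (cases "r < K \<and> g < K")
  case True
  then show ?thesis by simp
next
  case False
  define r' g' where "r' = min r K" and "g' = min g K"
  have r'g': "1 \<le> r'" "1 \<le> g'" "2 * L + 2 \<le> r' \<or> 2 * L + 2 \<le> g'"
    using False assms by (auto simp: r'_def g'_def)
  have large: "2 * L + 2 \<le> r \<or> 2 * L + 2 \<le> g" using False assms(4) by auto
  then obtain x where x: "far_point (2 * r + g) r L x"
    using exists_far_point[OF assms(1,2)] by blast
  obtain x' where x': "far_point (2 * r' + g') r' L x'"
    using exists_far_point[OF r'g'] by blast
  have hits: "hits (2 * r + g) r c s \<longleftrightarrow> hits (2 * r' + g') r' c s"
    if "\<bar>c\<bar> \<le> 2" "\<bar>s\<bar> \<le> int (3 * L)" for c s
    unfolding r'_def g'_def using assms that by (intro hits_truncate[where M = "3 * L"]) auto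
  have returns: "rel_returns (hits (2 * r + g) r) u j t \<longleftrightarrow> rel_returns (hits (2 * r' + g') r') u j t"
    if "j \<in> {0, 1, 2}" "\<bar>t\<bar> \<le> int L" for j t
    using that assms(3) by (intro rel_returns_cong hits) auto
  have D: "2 * r + 1 \<le> 2 * r + g" "2 * L < 2 * r + g" "2 * r' + 1 \<le> 2 * r' + g'" "2 * L < 2 * r' + g'"
    using assms r'g' large by auto
  have "word_perm (2 * r + g) r u = id \<longleftrightarrow>
      alpha_exp u = 0 \<and> (\<forall>j\<in>{0, 1, 2}. \<forall>t. \<bar>t\<bar> \<le> int L \<longrightarrow> rel_returns (hits (2 * r + g) r) u j t)"
    by (rule word_perm_eq_id_iff[OF assms(1) D(1) assms(3) D(2) x])
  also have "\<dots> \<longleftrightarrow>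
      alpha_exp u = 0 \<and> (\<forall>j\<in>{0, 1, 2}. \<forall>t. \<bar>t\<bar> \<le> int L \<longrightarrow> rel_returns (hits (2 * r' + g') r') u j t)"
    using returns by blast
  also have "\<dots> \<longleftrightarrow> word_perm (2 * r' + g') r' u = id"
    by (rule word_perm_eq_id_iff[OF r'g'(1) D(3) assms(3) D(4) x', symmetric])
  finally show ?thesis by (simp add: r'_def g'_def)
qed

lemma word_perm_eq_truncate:
  assumes "1 \<le> r" "1 \<le> g" "6 * (length u + length v) + 2 \<le> K"
  shows "word_perm (2 * r + g) r u = word_perm (2 * r + g) r v \<longleftrightarrow>
    word_perm (2 * min r K + min g K) (min r K) u = word_perm (2 * min r K + min g K) (min r K) v"
proof -
  have "1 \<le> min r K" "2 * min r K + 1 \<le> 2 * min r K + min g K"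
    using assms by auto
  then show ?thesis
    using assms word_perm_eq_id_truncate[OF assms(1,2), of "word_inv u @ v" "length u + length v" K]
    by (simp add: word_perm_eq_iff)
qed

section \<open>The ball in the product of alternating groups\<close>

definition letter_elem :: "(nat \<Rightarrow> nat) \<Rightarrow> (nat \<Rightarrow> nat) \<Rightarrow> letter \<Rightarrow> pelem" where
  "letter_elem d r c = (case c of Alpha \<Rightarrow> alpha_seq d | Beta \<Rightarrow> beta_seq r
     | Alpha_inv \<Rightarrow> pinv (alpha_seq d) | Beta_inv \<Rightarrow> pinv (beta_seq r))"

definition word_elem :: "(nat \<Rightarrow> nat) \<Rightarrow> (nat \<Rightarrow> nat) \<Rightarrow> letter list \<Rightarrow> pelem" where
  "word_elem d r u = foldr pmult (map (letter_elem d r) u) pone"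

lemma word_elem_append: "word_elem d r (u @ v) = pmult (word_elem d r u) (word_elem d r v)"
  by (induction u) (simp_all add: word_elem_def pmult_def pone_def comp_assoc)

lemma word_ball_eq_image:
  "word_ball {alpha_seq d, beta_seq r} l = word_elem d r ` {u. length u \<le> l}"
proof -
  have range: "range (letter_elem d r) = {alpha_seq d, beta_seq r} \<union> pinv ` {alpha_seq d, beta_seq r}"
    by (auto simp: letter_elem_def split: letter.splits intro: range_eqI[of _ _ Alpha]
        range_eqI[of _ _ Beta] range_eqI[of _ _ Alpha_inv] range_eqI[of _ _ Beta_inv])
  have "set w \<subseteq> range (letter_elem d r) \<longleftrightarrow> (\<exists>u. w = map (letter_elem d r) u)" for w
    by (auto simp: ex_map_conv)
  then show ?thesis
    unfolding word_ball_def word_elem_def range[symmetric] by auto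
qed

lemma word_elem_component:
  assumes "\<forall>n\<ge>1. 1 \<le> r n \<and> 2 * r n + 1 \<le> d n"
  shows "word_elem d r u n = (if n = 0 then id else word_perm (d n) (r n) u)"
proof (induction u)
  case Nil
  then show ?case by (simp add: word_elem_def pone_def)
next
  case (Cons c u)
  have "letter_elem d r c n = (if n = 0 then id else letter_perm (d n) (r n) c)"
  proof (cases "n = 0")
    case True
    then show ?thesis
      by (cases c) (auto simp: letter_elem_def pinv_def alpha_seq_def beta_seq_def inv_id[unfolded id_def])
  next
    case False
    then have "1 \<le> r n" "2 * r n + 1 \<le> d n" using assms by auto
    moreover have "alpha_seq d n = letter_perm (d n) (r n) Alpha" "beta_seq r n = letter_perm (d n) (r n) Beta"
      using False by (auto simp: alpha_seq_def beta_seq_def fun_eq_iff)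
    ultimately show ?thesis
      using False by (cases c) (simp_all add: letter_elem_def pinv_def inv_letter_perm)
  qed
  then show ?case
    using Cons by (simp add: word_elem_def pmult_def)
qed

lemma word_elem_eq_iff:
  assumes "\<forall>n\<ge>1. 1 \<le> r n \<and> 2 * r n + 1 \<le> d n"
  shows "word_elem d r u = word_elem d r v \<longleftrightarrow>
    (\<forall>n\<ge>1. word_perm (d n) (r n) u = word_perm (d n) (r n) v)"
  using word_elem_component[OF assms] by (auto simp: fun_eq_iff)

lemma word_elem_eq_iff_truncated:
  assumes params: "\<forall>n\<ge>1. n \<le> r n \<and> n \<le> d n - 2 * r n"
    and K: "6 * (length u + length v) + 2 \<le> K"
  shows "word_elem d r u = word_elem d r v \<longleftrightarrow>
    (\<forall>n\<in>{1..K}. word_perm (2 * min (r n) K + min (d n - 2 * r n) K) (min (r n) K) u =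
                word_perm (2 * min (r n) K + min (d n - 2 * r n) K) (min (r n) K) v)"
    (is "_ \<longleftrightarrow> (\<forall>n\<in>{1..K}. ?trunc n)")
proof -
  have "word_elem d r u = word_elem d r v \<longleftrightarrow>
      (\<forall>n\<ge>1. word_perm (d n) (r n) u = word_perm (d n) (r n) v)"
    using params by (intro word_elem_eq_iff) force
  also have "\<dots> \<longleftrightarrow> (\<forall>n\<ge>1. ?trunc n)"
  proof (intro all_cong imp_cong refl)
    fix n :: nat assume "1 \<le> n"
    then have "1 \<le> r n" "1 \<le> d n - 2 * r n" "d n = 2 * r n + (d n - 2 * r n)"
      using params by force+
    then show "word_perm (d n) (r n) u = word_perm (d n) (r n) v \<longleftrightarrow> ?trunc n"
      using word_perm_eq_truncate[of "r n" "d n - 2 * r n" u v K] K by metis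
  qed
  also have "\<dots> \<longleftrightarrow> (\<forall>n\<in>{1..K}. ?trunc n)"
  proof -
    have "min (r n) K = K \<and> min (d n - 2 * r n) K = K" if "K \<le> n" for n
    proof -
      have "n \<le> r n" "n \<le> d n - 2 * r n" using params that K by auto
      then show ?thesis using that by simp
    qed
    then have same: "?trunc n \<longleftrightarrow> ?trunc K" if "K \<le> n" for n
      using that by simp
    have "1 \<le> K" using K by simp
    then show ?thesis
      using same by (metis atLeastAtMost_iff nle_le)
  qed
  finally show ?thesis .
qed

lemma restrict_eq_restrict_iff: "restrict f A = restrict g A \<longleftrightarrow> (\<forall>x\<in>A. f x = g x)"
  by (auto simp: restrict_def fun_eq_iff)

lemma order_product_sym_group:
  "finite I \<Longrightarrow> order (product_group I (\<lambda>n. sym_group (D n))) = (\<Prod>n\<in>I. fact (D n))"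
  by (simp add: order_def card_PiE sym_group_card_carrier)

lemma L_alt_le_fact_power:
  assumes params: "\<forall>n\<ge>1. n \<le> r n \<and> n \<le> d n - 2 * r n" and K: "18 * l + 2 \<le> K"
  shows "L_alt d r l \<le> fact (3 * K) ^ K"
proof -
  define r' D where "r' n = min (r n) K" and "D n = 2 * min (r n) K + min (d n - 2 * r n) K" for n
  let ?Q = "product_group {1..K} (\<lambda>n. sym_group (D n))"
  have perm: "word_perm (D n) (r' n) u \<in> carrier (sym_group (D n))" if "n \<in> {1..K}" for n u
  proof -
    have "n \<le> r n" "n \<le> d n - 2 * r n" using params that by auto
    then have "1 \<le> r' n" "2 * r' n + 1 \<le> D n" using that by (auto simp: r'_def D_def)
    then have "word_perm (D n) (r' n) u permutes {1..D n}" by (rule word_perm_permutes)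
    then show ?thesis by (simp add: sym_group_def)
  qed
  have "\<exists>\<psi>. local_embedding pmult (word_elem d r ` {u. length u \<le> l}) ?Q \<psi>"
  proof (rule local_embedding_of_word_maps)
    show "word_elem d r (u @ v) = pmult (word_elem d r u) (word_elem d r v)" for u v
      by (rule word_elem_append)
    show "(\<lambda>n\<in>{1..K}. word_perm (D n) (r' n) (u @ v)) =
        (\<lambda>n\<in>{1..K}. word_perm (D n) (r' n) u) \<otimes>\<^bsub>?Q\<^esub> (\<lambda>n\<in>{1..K}. word_perm (D n) (r' n) v)" for u v
      by (auto simp: word_perm_append sym_group_def intro: restrict_ext)
    show "(\<lambda>n\<in>{1..K}. word_perm (D n) (r' n) u) \<in> carrier ?Q" for u
      using perm by simp
    show "word_elem d r u = word_elem d r v \<longleftrightarrow>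
        (\<lambda>n\<in>{1..K}. word_perm (D n) (r' n) u) = (\<lambda>n\<in>{1..K}. word_perm (D n) (r' n) v)"
      if "length u \<le> l" "length v \<le> 2 * l" for u v
      using word_elem_eq_iff_truncated[OF params, of u v K] that K
      by (simp add: restrict_eq_restrict_iff r'_def D_def)
  qed
  moreover have "group ?Q"
    by (simp add: sym_group_is_group)
  moreover have "finite (carrier ?Q)"
    by (auto simp: sym_group_def intro: finite_PiE finite_permutations)
  ultimately have "L_alt d r l \<le> order ?Q"
    unfolding L_alt_def word_ball_eq_image using min_local_order_le_order by blast
  also have "\<dots> = (\<Prod>n\<in>{1..K}. fact (D n))"
    by (simp add: order_product_sym_group)
  also have "\<dots> \<le> (\<Prod>n\<in>{1..K}. fact (3 * K))"
    by (intro prod_mono) (auto simp: D_def intro: fact_mono)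
  finally show ?thesis by simp
qed

lemma fact_power_le_exp:
  fixes l :: nat
  assumes l: "2 \<le> l"
  shows "real (fact (3 * (18 * l + 2)) ^ (18 * l + 2)) \<le> exp (8000 * (real l)\<^sup>2 * ln (real l))"
proof -
  define K where "K = 18 * l + 2"
  have "3 * K \<le> 64 * l" using l by (simp add: K_def)
  also have "\<dots> \<le> l ^ 6 * l"
    using power_mono[OF l, of 6] by simp
  also have "\<dots> = l ^ 7" by (simp add: numeral_eq_Suc)
  finally have base: "3 * K \<le> l ^ 7" .
  have "fact (3 * K) \<le> (3 * K) ^ (3 * K)"
    using fact_le_power[of "3 * K", where 'a = nat] by simp
  then have "fact (3 * K) ^ K \<le> ((3 * K) ^ (3 * K)) ^ K"
    by (rule power_mono) simp
  also have "\<dots> \<le> ((l ^ 7) ^ (3 * K)) ^ K"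
    using base by (intro power_mono) simp_all
  also have "\<dots> = l ^ (21 * K * K)"
    by (simp add: power_mult[symmetric] mult.commute mult.left_commute)
  finally have "real (fact (3 * K) ^ K) \<le> real l ^ (21 * K * K)"
    by (metis of_nat_le_iff of_nat_power)
  also have "\<dots> = exp (real (21 * K * K) * ln (real l))"
    using l by (simp only: exp_of_nat_mult) simp
  also have "\<dots> \<le> exp (8000 * (real l)\<^sup>2 * ln (real l))"
  proof -
    have "K \<le> 19 * l" using l by (simp add: K_def)
    then have "K * K \<le> (19 * l) * (19 * l)" by (intro mult_le_mono)
    then have "21 * K * K \<le> 8000 * l\<^sup>2"
      by (simp add: power2_eq_square)
    then have "real (21 * K * K) \<le> 8000 * (real l)\<^sup>2"
      by (metis of_nat_le_iff of_nat_mult of_nat_numeral of_nat_power)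
    then show ?thesis
      using l by (intro exp_mono mult_right_mono) simp_all
  qed
  finally show ?thesis unfolding K_def .
qed

theorem proposition3p11:
  shows "\<exists>C::real > 0. \<forall>(d :: nat \<Rightarrow> nat) (r :: nat \<Rightarrow> nat).
     (\<forall>m n. 1 \<le> m \<longrightarrow> m \<le> n \<longrightarrow> d m \<le> d n) \<and>
     (\<forall>n\<ge>1. odd (d n) \<and> d n \<ge> 5 \<and> d n \<ge> 2 * r n + 1 \<and> r n \<ge> n \<and> d n - 2 * r n \<ge> n)
     \<longrightarrow> (\<forall>l::nat. l \<ge> 2 \<longrightarrow>
            real (L_alt d r l) \<le> exp (C * (real l)\<^sup>2 * ln (real l)))"
proof (intro exI[of _ "8000::real"] conjI allI impI)
  show "(0::real) < 8000" by simp
  fix d r :: "nat \<Rightarrow> nat" and l :: nat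
  assume H: "(\<forall>m n. 1 \<le> m \<longrightarrow> m \<le> n \<longrightarrow> d m \<le> d n) \<and>
     (\<forall>n\<ge>1. odd (d n) \<and> d n \<ge> 5 \<and> d n \<ge> 2 * r n + 1 \<and> r n \<ge> n \<and> d n - 2 * r n \<ge> n)"
    and l: "2 \<le> l"
  have "\<forall>n\<ge>1. n \<le> r n \<and> n \<le> d n - 2 * r n"
    using H by auto
  then have "L_alt d r l \<le> fact (3 * (18 * l + 2)) ^ (18 * l + 2)"
    by (rule L_alt_le_fact_power) simp
  then show "real (L_alt d r l) \<le> exp (8000 * (real l)\<^sup>2 * ln (real l))"
    using fact_power_le_exp[OF l] by (meson of_nat_le_iff order_trans)
qed

end
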